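(* Let $n\ge3$ and $L>1$, and define $$\sigma_{0,2}=\frac{(n-2)(1+L^{n-1})}{L^{n-1}-L},\qquad \sigma_{2,1}=\frac{L^{n+2}(2+Ln)+(n+2L)-\sqrt{\left(L^{n+2}(2+Ln)+(n+2L)\right)^2-8Ln(L^{n+2}-1)^2}}{2L(L^{n+2}-1)}.$$ Then $\sigma_{2,1}\le\sigma_{0,2}$. *)

theory Defs
  imports Complex_Main
begin

end

theory Submission
  imports Defs
begin

text \<open>Write \<open>b = L^(n+2)\<close>.  Then \<open>sigma_21\<close> is the smaller root of
  \<open>q x = L (b - 1) x^2 - (b (2 + L n) + n + 2 L) x + 2 n (b - 1)\<close>, and
  \<open>q x = b (L x - 2) (x - n) - (L x + n) (x + 2)\<close>.  Hence \<open>q\<close> is nonpositive between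
  \<open>2 / L\<close> and \<open>n\<close>, so every such point bounds \<open>sigma_21\<close> from above.  Either
  \<open>sigma_02 \<ge> n\<close>, or \<open>sigma_02\<close> itself lies in that range, because \<open>L sigma_02 \<ge> 2\<close>.\<close>

definition sigma_02 :: "nat \<Rightarrow> real \<Rightarrow> real" where
  "sigma_02 n L = (real n - 2) * (1 + L ^ (n - 1)) / (L ^ (n - 1) - L)"

definition sigma_21 :: "nat \<Rightarrow> real \<Rightarrow> real" where
  "sigma_21 n L =
     (L ^ (n + 2) * (2 + L * real n) + (real n + 2 * L)
       - sqrt ((L ^ (n + 2) * (2 + L * real n) + (real n + 2 * L))\<^sup>2
               - 8 * L * real n * (L ^ (n + 2) - 1)\<^sup>2))
     / (2 * L * (L ^ (n + 2) - 1))"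

lemma quadratic_smaller_root_le:
  fixes a b c x :: real
  assumes "a > 0" and "a * x\<^sup>2 - b * x + c \<le> 0"
  shows "(b - sqrt (b\<^sup>2 - 4 * a * c)) / (2 * a) \<le> x"
proof -
  have "4 * a * c \<le> 4 * a * (b * x - a * x\<^sup>2)"
    using assms by (intro mult_left_mono) auto
  then have "(b - 2 * a * x)\<^sup>2 \<le> b\<^sup>2 - 4 * a * c"
    by (simp add: power2_eq_square algebra_simps)
  then have "\<bar>b - 2 * a * x\<bar> \<le> sqrt (b\<^sup>2 - 4 * a * c)"
    by (metis real_sqrt_abs real_sqrt_le_mono)
  then have "b - sqrt (b\<^sup>2 - 4 * a * c) \<le> 2 * a * x"
    by linarith
  then show ?thesis
    using assms(1) by (simp add: divide_le_eq mult.commute)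
qed

lemma sigma_21_le:
  fixes n :: nat and L x :: real
  assumes "L > 1" and "x \<ge> 0" and "(L * x - 2) * (x - real n) \<le> 0"
  shows "sigma_21 n L \<le> x"
proof -
  define b where "b = L ^ (n + 2)"
  define B where "B = b * (2 + L * real n) + (real n + 2 * L)"
  have "b > 1"
    unfolding b_def using assms(1) by (intro one_less_power) auto
  have factored: "L * (b - 1) * x\<^sup>2 - B * x + 2 * real n * (b - 1)
      = b * ((L * x - 2) * (x - real n)) - (L * x + real n) * (x + 2)"
    unfolding B_def by (simp add: power2_eq_square algebra_simps)
  have "b * ((L * x - 2) * (x - real n)) \<le> 0"
    using \<open>b > 1\<close> assms(3) by (simp add: mult_nonneg_nonpos)
  moreover have "(L * x + real n) * (x + 2) \<ge> 0"
    using assms(1,2) by simp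
  ultimately have "L * (b - 1) * x\<^sup>2 - B * x + 2 * real n * (b - 1) \<le> 0"
    unfolding factored by linarith
  moreover have "L * (b - 1) > 0"
    using \<open>b > 1\<close> assms(1) by simp
  ultimately have root: "(B - sqrt (B\<^sup>2 - 4 * (L * (b - 1)) * (2 * real n * (b - 1))))
      / (2 * (L * (b - 1))) \<le> x"
    by (intro quadratic_smaller_root_le) auto
  have discriminant: "4 * (L * (b - 1)) * (2 * real n * (b - 1)) = 8 * L * real n * (b - 1)\<^sup>2"
    by (simp add: power2_eq_square)
  show ?thesis
    unfolding sigma_21_def b_def[symmetric] B_def[symmetric] mult.assoc[of 2 L]
    using root unfolding discriminant .
qed

lemma two_le_mult_sigma_02:
  fixes n :: nat and L :: real
  assumes "n \<ge> 3" and "L > 1"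
  shows "2 \<le> L * sigma_02 n L"
proof -
  define a where "a = L ^ (n - 1)"
  have "L\<^sup>2 \<le> a"
    unfolding a_def using assms by (intro power_increasing) auto
  moreover have "L < L\<^sup>2"
    using assms(2) by (simp add: power2_eq_square)
  ultimately have "a > L" by linarith
  have "2 * (a - L) \<le> L * ((real n - 2) * (1 + a))"
  proof (cases "n = 3")
    case True
    then have "a = L\<^sup>2"
      by (simp add: a_def)
    have "0 \<le> L * ((L - 1) * (L - 1))"
      using assms(2) by simp
    then show ?thesis
      using True \<open>a = L\<^sup>2\<close> assms(2) by (simp add: power2_eq_square algebra_simps)
  next
    case False
    then have "2 \<le> real n - 2"
      using assms(1) by simp
    have "2 * (a - L) \<le> 2 * (1 + a)"
      using assms(2) by simp
    also have "\<dots> \<le> (real n - 2) * (1 + a)"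
      using \<open>2 \<le> real n - 2\<close> \<open>a > L\<close> assms(2) by (intro mult_right_mono) auto
    also have "\<dots> \<le> L * ((real n - 2) * (1 + a))"
      using \<open>2 \<le> real n - 2\<close> \<open>a > L\<close> assms(2) unfolding mult_le_cancel_right1
      by (simp add: mult_less_0_iff)
    finally show ?thesis .
  qed
  then show ?thesis
    unfolding sigma_02_def a_def[symmetric] using \<open>a > L\<close>
    by (simp add: le_divide_eq mult.assoc)
qed

theorem lemma2p4:
  fixes n :: nat and L :: real
  assumes "n \<ge> 3" and "L > 1"
  shows "(L ^ (n + 2) * (2 + L * real n) + (real n + 2 * L)
            - sqrt ((L ^ (n + 2) * (2 + L * real n) + (real n + 2 * L))\<^sup>2
                    - 8 * L * real n * (L ^ (n + 2) - 1)\<^sup>2))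
           / (2 * L * (L ^ (n + 2) - 1))
         \<le> (real n - 2) * (1 + L ^ (n - 1)) / (L ^ (n - 1) - L)"
proof -
  have "sigma_21 n L \<le> sigma_02 n L"
  proof (cases "real n \<le> sigma_02 n L")
    case True
    have "sigma_21 n L \<le> real n"
      using assms(2) by (intro sigma_21_le) auto
    with True show ?thesis
      by linarith
  next
    case False
    have "2 \<le> L * sigma_02 n L"
      using assms by (rule two_le_mult_sigma_02)
    then have "sigma_02 n L > 0"
      using assms(2) zero_less_mult_pos[of L "sigma_02 n L"] by simp
    have "(L * sigma_02 n L - 2) * (sigma_02 n L - real n) \<le> 0"
      using False \<open>2 \<le> L * sigma_02 n L\<close> by (intro mult_nonneg_nonpos) auto
    then show ?thesis
      using \<open>sigma_02 n L > 0\<close> assms(2) by (intro sigma_21_le) auto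
  qed
  then show ?thesis
    unfolding sigma_21_def sigma_02_def .
qed

end
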